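(* Let $L_{kal}$ be the steady-state Kalman filter gain. Then, for every selection matrix $D_a$ and every symmetric positive semidefinite $W$, $L_{kal}$ is an optimal solution of $$\max_{L\in\mathbb{R}^{n_x\times n_y},\ \lambda\in\mathbb{R}_+}\ \lambda\quad\text{s.t.}\quad \tfrac12 D_a^\top\Sigma_{r_\omega}^{-1}(L)D_a-\lambda D_a^\top W D_a\succeq0,\quad \rho(A-LC)<1,$$ i.e., $J_0(L_{kal})\ge J_0(L)$ for every $L$ with $\rho(A-LC)<1$.
   Context: Consider the discrete-time system $x(k+1)=Ax(k)+Bu(k)+B_\omega\omega(k)$, $y(k)=Cx(k)+D_\omega\omega(k)+y_a(k)$, with $x\in\mathbb{R}^{n_x}$, $y\in\mathbb{R}^{n_y}$, $\omega(k)\sim\mathcal N(0,I_{n_\omega})$ i.i.d., $(A,C)$ detectable, $(A,B_\omega)$ stabilizable, and an observer $\hat x(k+1)=A\hat x(k)+Bu(k)+L(y(k)-C\hat x(k))$ with residual $r(k)=y(k)-C\hat x(k)$. The attack is $y_a(k)=D_a\bar a$ for $k\ge0$ (zero before), where $D_a\in\mathbb{R}^{n_y\times n_a}$ has entries $(j_i,i)=1$ for the compromised sensor indices $j_1<\dots<j_{n_a}$ and zeros elsewhere; $W\in\mathbb{R}^{n_y\times n_y}$ is symmetric positive semidefinite. For $L$ with $\rho(A-LC)<1$ ($\rho$ = spectral radius), $\Sigma_{\tilde x}(L)$ solves $\Sigma=(A-LC)\Sigma(A-LC)^\top+(B_\omega-LD_\omega)(B_\omega-LD_\omega)^\top$ and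 $\Sigma_{r_\omega}(L)=C\Sigma_{\tilde x}(L)C^\top+D_\omega D_\omega^\top$ (assumed invertible). The steady-state Kalman filter gain $L_{kal}$ (predictor form matching the observer above) is stabilizing and minimizes the residual covariance: $\Sigma_{r_\omega}(L_{kal})\preceq\Sigma_{r_\omega}(L)$ for all $L$ with $\rho(A-LC)<1$. Define $J_0(L)=\min_{\bar a\in\mathbb{R}^{n_a}}\frac12\bar a^\top D_a^\top\Sigma_{r_\omega}^{-1}(L)D_a\bar a$ subject to $\bar a^\top D_a^\top WD_a\bar a\ge1$. $\mathbb{R}_+$ denotes the positive reals. *)

theory Defs
  imports "HOL-Analysis.Analysis"
begin

definition eigenvalues_c :: "real^'n^'n \<Rightarrow> complex set" where
  "eigenvalues_c M = {\<mu>. \<exists>v :: complex^'n. v \<noteq> 0 \<and>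
      (\<chi> i j. complex_of_real (M $ i $ j)) *v v = \<mu> *s v}"

definition spec_rad :: "real^'n^'n \<Rightarrow> real" where
  "spec_rad M = Sup (cmod ` eigenvalues_c M)"

definition psd :: "real^'n^'n \<Rightarrow> bool" where
  "psd M \<longleftrightarrow> transpose M = M \<and> (\<forall>x. 0 \<le> x \<bullet> (M *v x))"

definition loewner_le :: "real^'n^'n \<Rightarrow> real^'n^'n \<Rightarrow> bool" where
  "loewner_le M N \<longleftrightarrow> psd (N - M)"

definition detectable :: "real^'nx^'nx \<Rightarrow> real^'nx^'ny \<Rightarrow> bool" where
  "detectable A C \<longleftrightarrow> (\<exists>L :: real^'ny^'nx. spec_rad (A - L ** C) < 1)"

definition stabilizable :: "real^'nx^'nx \<Rightarrow> real^'nw^'nx \<Rightarrow> bool" where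
  "stabilizable A B \<longleftrightarrow> (\<exists>K :: real^'nx^'nw. spec_rad (A - B ** K) < 1)"

definition Sigma_x :: "real^'nx^'nx \<Rightarrow> real^'nx^'ny \<Rightarrow> real^'nw^'nx \<Rightarrow> real^'nw^'ny
    \<Rightarrow> real^'ny^'nx \<Rightarrow> real^'nx^'nx" where
  "Sigma_x A C Bw Dw L = (THE S. S = (A - L ** C) ** S ** transpose (A - L ** C)
       + (Bw - L ** Dw) ** transpose (Bw - L ** Dw))"

definition Sigma_r :: "real^'nx^'nx \<Rightarrow> real^'nx^'ny \<Rightarrow> real^'nw^'nx \<Rightarrow> real^'nw^'ny
    \<Rightarrow> real^'ny^'nx \<Rightarrow> real^'ny^'ny" where
  "Sigma_r A C Bw Dw L = C ** Sigma_x A C Bw Dw L ** transpose C + Dw ** transpose Dw"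

definition sel_matrix :: "('na \<Rightarrow> 'ny) \<Rightarrow> real^'na^'ny" where
  "sel_matrix j = (\<chi> r i. if r = j i then 1 else 0)"

text \<open>J_0(L): minimum over the constraint set (Inf in the extended reals; +\<infinity> if infeasible).\<close>
definition J0 :: "real^'nx^'nx \<Rightarrow> real^'nx^'ny \<Rightarrow> real^'nw^'nx \<Rightarrow> real^'nw^'ny
    \<Rightarrow> real^'na^'ny \<Rightarrow> real^'ny^'ny \<Rightarrow> real^'ny^'nx \<Rightarrow> ereal" where
  "J0 A C Bw Dw Da W L = Inf ((\<lambda>a. ereal (1/2 * ((Da *v a) \<bullet> (matrix_inv (Sigma_r A C Bw Dw L) *v (Da *v a)))))
      ` {a. 1 \<le> (Da *v a) \<bullet> (W *v (Da *v a))})"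

definition feasible :: "real^'nx^'nx \<Rightarrow> real^'nx^'ny \<Rightarrow> real^'nw^'nx \<Rightarrow> real^'nw^'ny
    \<Rightarrow> real^'na^'ny \<Rightarrow> real^'ny^'ny \<Rightarrow> real^'ny^'nx \<Rightarrow> real \<Rightarrow> bool" where
  "feasible A C Bw Dw Da W L lam \<longleftrightarrow> lam > 0 \<and> spec_rad (A - L ** C) < 1 \<and>
     psd ((1/2) *\<^sub>R (transpose Da ** matrix_inv (Sigma_r A C Bw Dw L) ** Da)
          - lam *\<^sub>R (transpose Da ** W ** Da))"

end

(*
  Since Sigma_r(L_kal) <= Sigma_r(L) in the Loewner order and Sigma_r(L_kal) is positive
  semidefinite, inversion reverses the order: Sigma_r(L)^-1 <= Sigma_r(L_kal)^-1.  Congruence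
  with D_a and positive scaling preserve the Loewner order, so the matrix inequality of a feasible
  pair (L, lambda) also holds for (L_kal, lambda), and the quadratic form minimised in J_0 is
  pointwise larger at L_kal.

  Positive semidefiniteness of Sigma_r(L_kal) is where stability enters: if rho(A - L C) < 1,
  the powers of A - L C tend to zero (by the Jordan normal form), so the Lyapunov equation
  defining Sigma_x has a unique solution, and that solution is positive semidefinite.
*)
theory Submission
  imports Defs "Jordan_Normal_Form.Spectral_Radius"
begin

no_notation Matrix.vec_index (infixl \<open>$\<close> 100)
no_notation Matrix.scalar_prod (infix \<open>\<bullet>\<close> 70)
hide_const (open) Matrix.mat
hide_type (open) Matrix.vec

section \<open>Matrix algebra\<close>

lemma transpose_add: "transpose (A + B) = transpose A + transpose B"
  and transpose_diff: "transpose (A - B) = transpose A - transpose (B :: 'a::ab_group_add^'n^'m)"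
  by (simp_all add: transpose_def Finite_Cartesian_Product.vec_eq_iff)

lemma matrix_mult_add_right: "(B + C) ** D = B ** D + C ** (D :: 'a::semiring_1^'l^'k)"
  by (simp add: matrix_matrix_mult_def Finite_Cartesian_Product.vec_eq_iff
      distrib_right sum.distrib)

lemma matrix_mult_diff_left: "A ** (B - C) = A ** B - A ** (C :: 'a::ring_1^'k^'n)"
  and matrix_mult_diff_right: "(B - C) ** D = B ** D - C ** (D :: 'a::ring_1^'l^'k)"
  by (simp_all add: matrix_matrix_mult_def Finite_Cartesian_Product.vec_eq_iff
      algebra_simps sum_subtractf)

lemma matrix_inv_right: "invertible P \<Longrightarrow> P ** matrix_inv P = mat 1"
  unfolding invertible_def matrix_inv_def by (metis (mono_tags, lifting) someI_ex)

lemma tendsto_matrix_mult: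
  fixes f :: "'b \<Rightarrow> real^'n^'m" and g :: "'b \<Rightarrow> real^'k^'n"
  assumes "(f \<longlongrightarrow> a) F" "(g \<longlongrightarrow> b) F"
  shows "((\<lambda>x. f x ** g x) \<longlongrightarrow> a ** b) F"
  by (intro vec_tendstoI, unfold matrix_matrix_mult_def vec_lambda_beta,
      intro tendsto_sum tendsto_mult tendsto_vec_nth assms)

lemma tendsto_transpose:
  fixes f :: "'b \<Rightarrow> real^'n^'m"
  assumes "(f \<longlongrightarrow> a) F"
  shows "((\<lambda>x. transpose (f x)) \<longlongrightarrow> transpose a) F"
  by (intro vec_tendstoI, unfold transpose_def vec_lambda_beta, intro tendsto_vec_nth assms)

lemma tendsto_matrix_vector_mult:
  fixes f :: "'b \<Rightarrow> real^'n^'m"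
  assumes "(f \<longlongrightarrow> a) F"
  shows "((\<lambda>x. f x *v v) \<longlongrightarrow> a *v v) F"
  by (intro vec_tendstoI, unfold matrix_vector_mult_def vec_lambda_beta,
      intro tendsto_sum tendsto_mult tendsto_vec_nth assms tendsto_const)

section \<open>Positive semidefinite matrices and the Loewner order\<close>

lemma quadratic_form_congruence:
  fixes D :: "real^'m^'n"
  shows "x \<bullet> ((D ** N ** transpose D) *v x) = (transpose D *v x) \<bullet> (N *v (transpose D *v x))"
  by (simp add: matrix_vector_mul_assoc[symmetric] dot_lmul_matrix[symmetric])

lemma psd_mat_1: "psd (mat 1)"
  by (simp add: psd_def)

lemma psd_congruence: "psd N \<Longrightarrow> psd (D ** N ** transpose D)"
  unfolding psd_def
  by (simp add: quadratic_form_congruence matrix_transpose_mul matrix_mul_assoc)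

lemma psd_gram: "psd (G ** transpose G)"
  using psd_congruence[OF psd_mat_1, of G] by simp

lemma psd_add: "psd A \<Longrightarrow> psd B \<Longrightarrow> psd (A + B)"
  unfolding psd_def
  by (simp add: transpose_add matrix_vector_mult_add_rdistrib inner_add_right)

lemma loewner_le_trans: "loewner_le A B \<Longrightarrow> loewner_le B C \<Longrightarrow> loewner_le A C"
  unfolding loewner_le_def using psd_add[of "C - B" "B - A"] by simp

lemma loewner_le_scaleR: "0 \<le> c \<Longrightarrow> loewner_le A B \<Longrightarrow> loewner_le (c *\<^sub>R A) (c *\<^sub>R B)"
  unfolding loewner_le_def psd_def
  by (simp add: transpose_scalar scaleR_diff_right[symmetric] scaleR_matrix_vector_assoc[symmetric])

lemma loewner_le_congruence:
  "loewner_le A B \<Longrightarrow> loewner_le (D ** A ** transpose D) (D ** B ** transpose D)"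
  unfolding loewner_le_def using psd_congruence[of "B - A" D]
  by (simp add: matrix_mult_diff_left matrix_mult_diff_right)

lemma loewner_le_quadratic_form: "loewner_le A B \<Longrightarrow> x \<bullet> (A *v x) \<le> x \<bullet> (B *v x)"
  unfolding loewner_le_def psd_def
  by (simp add: matrix_vector_mult_diff_rdistrib inner_diff_right)

lemma transpose_matrix_inv_symmetric:
  fixes P :: "real^'n^'n"
  assumes "invertible P" "transpose P = P"
  shows "transpose (matrix_inv P) = matrix_inv P"
proof -
  have "transpose (matrix_inv P) ** P = mat 1"
    using arg_cong[OF matrix_inv_right[OF assms(1)], of transpose] assms(2)
    by (simp add: matrix_transpose_mul)
  then have "transpose (matrix_inv P) = transpose (matrix_inv P) ** (P ** matrix_inv P)"
    by (simp add: matrix_inv_right[OF assms(1)])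
  also have "\<dots> = matrix_inv P"
    by (simp add: matrix_mul_assoc \<open>transpose (matrix_inv P) ** P = mat 1\<close>)
  finally show ?thesis .
qed

lemma quadratic_form_matrix_inv_antimono:
  fixes P Q :: "real^'n^'n"
  assumes "psd P" "loewner_le P Q" "invertible P" "invertible Q"
  shows "x \<bullet> (matrix_inv Q *v x) \<le> x \<bullet> (matrix_inv P *v x)"
proof -
  \<comment> \<open>\<open>0 \<le> (y - z)\<bullet>P(y - z) = y\<bullet>Py - 2 y\<bullet>x + z\<bullet>x\<close> and \<open>y\<bullet>Py \<le> y\<bullet>Qy = y\<bullet>x\<close>\<close>
  define y where "y = matrix_inv Q *v x"
  define z where "z = matrix_inv P *v x"
  have "Q *v y = x" "P *v z = x"
    by (simp_all add: y_def z_def matrix_vector_mul_assoc matrix_inv_right assms)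
  moreover have "y \<bullet> (P *v z) = z \<bullet> (P *v y)"
    using \<open>psd P\<close> unfolding psd_def
    by (metis dot_lmul_matrix inner_commute transpose_matrix_vector)
  moreover have "0 \<le> (y - z) \<bullet> (P *v (y - z))"
    using \<open>psd P\<close> unfolding psd_def by simp
  moreover have "y \<bullet> (P *v y) \<le> y \<bullet> (Q *v y)"
    using \<open>loewner_le P Q\<close> by (rule loewner_le_quadratic_form)
  ultimately have "y \<bullet> x \<le> z \<bullet> x"
    by (simp add: matrix_vector_mult_diff_distrib inner_diff_left inner_diff_right inner_commute)
  then show ?thesis by (simp add: y_def z_def inner_commute)
qed

lemma loewner_le_matrix_inv:
  fixes P Q :: "real^'n^'n"
  assumes "psd P" "loewner_le P Q" "invertible P" "invertible Q"
  shows "loewner_le (matrix_inv Q) (matrix_inv P)"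
proof -
  have "transpose P = P" "transpose (Q - P) = Q - P"
    using assms(1,2) unfolding loewner_le_def psd_def by simp_all
  then have "transpose Q = Q"
    by (simp add: transpose_diff)
  then show ?thesis
    using quadratic_form_matrix_inv_antimono[OF assms] \<open>transpose P = P\<close>
      transpose_matrix_inv_symmetric[OF assms(3)] transpose_matrix_inv_symmetric[OF assms(4)]
    unfolding loewner_le_def psd_def
    by (simp add: transpose_diff matrix_vector_mult_diff_rdistrib inner_diff_right)
qed

section \<open>Powers of a matrix with spectral radius below one\<close>

fun matrix_power :: "'a::semiring_1^'n^'n \<Rightarrow> nat \<Rightarrow> 'a^'n^'n" where
  "matrix_power M 0 = mat 1"
| "matrix_power M (Suc k) = matrix_power M k ** M"

lemma matrix_power_scaleR:
  "matrix_power (c *\<^sub>R M) k = c ^ k *\<^sub>R matrix_power (M :: real^'n^'n) k"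
  by (induction k) (simp_all add: scalar_matrix_assoc matrix_scalar_ac mult.commute)

lemma cmod_eigenvalue_le_abs_entry_sum:
  fixes M :: "real^'n^'n"
  assumes "\<mu> \<in> eigenvalues_c M"
  shows "cmod \<mu> \<le> (\<Sum>i\<in>UNIV. \<Sum>j\<in>UNIV. \<bar>M $ i $ j\<bar>)"
proof -
  from assms obtain w :: "complex^'n" where "w \<noteq> 0"
    and ev: "(\<chi> i j. complex_of_real (M $ i $ j)) *v w = \<mu> *s w"
    unfolding eigenvalues_c_def by auto
  have "Max (range (\<lambda>j. cmod (w $ j))) \<in> range (\<lambda>j. cmod (w $ j))"
    by (rule Max_in) auto
  then obtain i where "cmod (w $ i) = Max (range (\<lambda>j. cmod (w $ j)))"
    by (metis rangeE)
  then have max: "cmod (w $ j) \<le> cmod (w $ i)" for j by simp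
  have "cmod (w $ i) > 0"
  proof (rule ccontr)
    assume "\<not> cmod (w $ i) > 0"
    then have "w $ j = 0" for j using max[of j] by simp
    then show False using \<open>w \<noteq> 0\<close> by (simp add: Finite_Cartesian_Product.vec_eq_iff)
  qed
  have "cmod \<mu> * cmod (w $ i) = cmod (\<Sum>j\<in>UNIV. complex_of_real (M $ i $ j) * w $ j)"
    using arg_cong[OF ev, of "\<lambda>v. cmod (v $ i)"] by (simp add: matrix_vector_mult_def norm_mult)
  also have "\<dots> \<le> (\<Sum>j\<in>UNIV. \<bar>M $ i $ j\<bar> * cmod (w $ i))"
    by (rule order.trans[OF norm_sum], rule sum_mono) (simp add: norm_mult mult_left_mono max)
  also have "\<dots> = (\<Sum>j\<in>UNIV. \<bar>M $ i $ j\<bar>) * cmod (w $ i)"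
    by (simp add: sum_distrib_right)
  finally have "cmod \<mu> \<le> (\<Sum>j\<in>UNIV. \<bar>M $ i $ j\<bar>)"
    using \<open>cmod (w $ i) > 0\<close> by simp
  also have "\<dots> \<le> (\<Sum>i\<in>UNIV. \<Sum>j\<in>UNIV. \<bar>M $ i $ j\<bar>)"
    by (rule member_le_sum) (auto intro: sum_nonneg)
  finally show ?thesis .
qed

lemma cmod_eigenvalue_le_spec_rad:
  "\<mu> \<in> eigenvalues_c M \<Longrightarrow> cmod \<mu> \<le> spec_rad M"
  unfolding spec_rad_def
  by (rule cSup_upper) (auto intro!: bdd_aboveI cmod_eigenvalue_le_abs_entry_sum)

lemma eigenvalues_c_scaleR:
  fixes M :: "real^'n^'n"
  assumes "\<mu> \<in> eigenvalues_c M"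
  shows "complex_of_real c * \<mu> \<in> eigenvalues_c (c *\<^sub>R M)"
proof -
  from assms obtain v :: "complex^'n" where "v \<noteq> 0"
    and ev: "(\<chi> i j. complex_of_real (M $ i $ j)) *v v = \<mu> *s v"
    unfolding eigenvalues_c_def by auto
  have "(\<chi> i j. complex_of_real ((c *\<^sub>R M) $ i $ j)) *v v = (complex_of_real c * \<mu>) *s v"
    using arg_cong[OF ev, of "(*s) (complex_of_real c)"]
    by (simp add: Finite_Cartesian_Product.vec_eq_iff matrix_vector_mult_def
        sum_distrib_left mult.assoc)
  with \<open>v \<noteq> 0\<close> show ?thesis unfolding eigenvalues_c_def by blast
qed

text \<open>Cartesian matrices are read as \<^typ>\<open>complex mat\<close>s of the Jordan normal form
  library along a fixed enumeration of the index type.\<close>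

definition cart_index :: "nat \<Rightarrow> 'n::finite" where
  "cart_index = (SOME h. bij_betw h {0..<CARD('n)} UNIV)"

definition cart_pos :: "'n::finite \<Rightarrow> nat" where
  "cart_pos = inv_into {0..<CARD('n)} cart_index"

lemma bij_betw_cart_index: "bij_betw (cart_index :: nat \<Rightarrow> 'n::finite) {0..<CARD('n)} UNIV"
proof -
  have "\<exists>h. bij_betw h {0..<CARD('n)} (UNIV :: 'n set)"
    by (rule ex_bij_betw_nat_finite) simp
  then show ?thesis unfolding cart_index_def by (rule someI_ex)
qed

lemma cart_pos_less: "cart_pos (i :: 'n::finite) < CARD('n)"
  using bij_betwE[OF bij_betw_inv_into[OF bij_betw_cart_index]] unfolding cart_pos_def by auto

lemma cart_index_pos [simp]: "cart_index (cart_pos i) = i"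
  unfolding cart_pos_def
  by (rule f_inv_into_f) (simp add: bij_betw_imp_surj_on[OF bij_betw_cart_index])

lemma cart_pos_index [simp]: "k < CARD('n) \<Longrightarrow> cart_pos (cart_index k :: 'n::finite) = k"
  unfolding cart_pos_def
  by (rule inv_into_f_f[OF bij_betw_imp_inj_on[OF bij_betw_cart_index]]) simp

lemma sum_cart_index: "(\<Sum>k = 0..<CARD('n). g (cart_index k)) = (\<Sum>i \<in> UNIV. g (i :: 'n::finite))"
  by (rule sum.reindex_bij_betw[OF bij_betw_cart_index])

definition to_cmat :: "real^'n^'n \<Rightarrow> complex mat" where
  "to_cmat N = Matrix.mat CARD('n) CARD('n)
     (\<lambda>(k, l). complex_of_real (N $ cart_index k $ cart_index l))"

lemma to_cmat_carrier: "to_cmat (N :: real^'n^'n) \<in> carrier_mat CARD('n) CARD('n)"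
  by (simp add: to_cmat_def)

lemma to_cmat_entry: "to_cmat N $$ (cart_pos i, cart_pos j) = complex_of_real (N $ i $ j)"
  by (simp add: to_cmat_def cart_pos_less)

lemma to_cmat_mult: "to_cmat (N ** K) = to_cmat N * to_cmat (K :: real^'n^'n)"
proof (rule eq_matI)
  fix k l assume "k < dim_row (to_cmat N * to_cmat K)" "l < dim_col (to_cmat N * to_cmat K)"
  then have "k < CARD('n)" "l < CARD('n)" by (auto simp: to_cmat_def)
  then show "to_cmat (N ** K) $$ (k, l) = (to_cmat N * to_cmat K) $$ (k, l)"
    by (simp add: to_cmat_def scalar_prod_def matrix_matrix_mult_def
        sum_cart_index[where g = "\<lambda>i. complex_of_real (N $ cart_index k $ i)
                                       * complex_of_real (K $ i $ cart_index l)"])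
qed (simp_all add: to_cmat_def)

lemma to_cmat_one: "to_cmat (mat 1 :: real^'n^'n) = 1\<^sub>m CARD('n)"
proof (rule eq_matI)
  fix k l
  assume "k < dim_row (1\<^sub>m CARD('n) :: complex mat)" "l < dim_col (1\<^sub>m CARD('n) :: complex mat)"
  then have "k < CARD('n)" "l < CARD('n)" by auto
  moreover from this have "(cart_index k :: 'n) = cart_index l \<longleftrightarrow> k = l"
    by (metis cart_pos_index)
  ultimately show "to_cmat (mat 1 :: real^'n^'n) $$ (k, l) = 1\<^sub>m CARD('n) $$ (k, l)"
    by (simp add: to_cmat_def Finite_Cartesian_Product.mat_def)
qed (simp_all add: to_cmat_def)

lemma to_cmat_matrix_power: "to_cmat (matrix_power N k) = to_cmat (N :: real^'n^'n) ^\<^sub>m k"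
  by (induction k) (simp_all add: to_cmat_one to_cmat_mult carrier_matD[OF to_cmat_carrier])

lemma eigenvalue_to_cmat:
  fixes N :: "real^'n^'n"
  assumes "eigenvalue (to_cmat N) \<mu>"
  shows "\<mu> \<in> eigenvalues_c N"
proof -
  from assms obtain v where v: "v \<in> carrier_vec CARD('n)" "v \<noteq> 0\<^sub>v CARD('n)"
    and ev: "to_cmat N *\<^sub>v v = \<mu> \<cdot>\<^sub>v v"
    unfolding eigenvalue_def eigenvector_def by (auto simp: to_cmat_def)
  define w :: "complex^'n" where "w = (\<chi> i. vec_index v (cart_pos i))"
  obtain k where k: "k < CARD('n)" "vec_index v k \<noteq> 0"
    using v by (metis eq_vecI carrier_vecD index_zero_vec)
  have "w $ cart_index k \<noteq> 0" using k by (simp add: w_def)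
  then have "w \<noteq> 0" by auto
  moreover have "(\<chi> i j. complex_of_real (N $ i $ j)) *v w = \<mu> *s w"
  proof -
    have "(\<Sum>j\<in>UNIV. complex_of_real (N $ i $ j) * w $ j) = \<mu> * w $ i" for i
    proof -
      have "(\<Sum>j\<in>UNIV. complex_of_real (N $ i $ j) * w $ j)
          = (\<Sum>k = 0..<CARD('n). complex_of_real (N $ i $ cart_index k) * vec_index v k)"
        by (auto simp: w_def sum_cart_index[symmetric] intro!: sum.cong)
      also have "\<dots> = \<mu> * w $ i"
        using arg_cong[OF ev, of "\<lambda>u. vec_index u (cart_pos i)"] v(1) cart_pos_less[of i]
        by (simp add: to_cmat_def scalar_prod_def w_def)
      finally show ?thesis .
    qed
    then show ?thesis by (simp add: Finite_Cartesian_Product.vec_eq_iff matrix_vector_mult_def)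
  qed
  ultimately show ?thesis unfolding eigenvalues_c_def by blast
qed

lemma bounded_matrix_power:
  fixes M :: "real^'n^'n"
  assumes "\<And>\<mu>. \<mu> \<in> eigenvalues_c M \<Longrightarrow> cmod \<mu> < 1"
  obtains c where "\<And>k i j. \<bar>matrix_power M k $ i $ j\<bar> \<le> c"
proof -
  obtain \<mu> where "\<mu> \<in> spectrum (to_cmat M)" and "spectral_radius (to_cmat M) = cmod \<mu>"
    using spectral_radius_mem_max(1)[OF to_cmat_carrier] by fastforce
  then have "spectral_radius (to_cmat M) < 1"
    using assms eigenvalue_to_cmat unfolding spectrum_def by auto
  then obtain c where bound: "\<And>k. norm_bound (to_cmat (matrix_power M k)) c"
    using spectral_radius_jnf_norm_bound_less_1_upper_triangular[OF to_cmat_carrier]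
    by (auto simp: to_cmat_matrix_power)
  have "cmod (to_cmat (matrix_power M k) $$ (cart_pos i, cart_pos j)) \<le> c" for k and i j :: 'n
    using bound[of k] cart_pos_less[of i] cart_pos_less[of j]
    unfolding norm_bound_def by (simp add: carrier_matD[OF to_cmat_carrier])
  then show thesis by (intro that) (simp add: to_cmat_entry)
qed

lemma matrix_power_tendsto_zero:
  fixes M :: "real^'n^'n"
  assumes "spec_rad M < 1"
  shows "(matrix_power M \<longlongrightarrow> 0) sequentially"
proof -
  obtain r where r: "max 0 (spec_rad M) < r" "r < 1"
    using assms dense[of "max 0 (spec_rad M)" 1] by auto
  \<comment> \<open>The Jordan form only bounds the powers of \<open>M / r\<close>; the factor \<open>r ^ k\<close> gives decay.\<close>
  define M' where "M' = (1 / r) *\<^sub>R M"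
  have M: "M = r *\<^sub>R M'" using r by (simp add: M'_def)
  have "cmod \<mu> < 1" if "\<mu> \<in> eigenvalues_c M'" for \<mu>
  proof -
    have "r * cmod \<mu> \<le> spec_rad M"
      using cmod_eigenvalue_le_spec_rad[OF eigenvalues_c_scaleR[OF that, of r]] r
      by (simp add: M norm_mult)
    also have "\<dots> < r * 1" using r by simp
    finally show ?thesis using r by (simp add: mult_less_cancel_left_pos)
  qed
  then obtain c where c: "\<And>k i j. \<bar>matrix_power M' k $ i $ j\<bar> \<le> c"
    using bounded_matrix_power by blast
  have "(\<lambda>k. matrix_power M k $ i $ j) \<longlonglongrightarrow> 0" for i j
  proof (rule Lim_null_comparison)
    show "\<forall>\<^sub>F k in sequentially. norm (matrix_power M k $ i $ j) \<le> r ^ k * c"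
      using r c by (intro always_eventually allI)
        (simp add: M matrix_power_scaleR abs_mult mult_left_mono)
    show "(\<lambda>k. r ^ k * c) \<longlonglongrightarrow> 0"
      using r by (intro tendsto_mult_left_zero LIMSEQ_power_zero) auto
  qed
  then show ?thesis by (intro vec_tendstoI) simp
qed

section \<open>The discrete Lyapunov equation\<close>

lemma matrix_power_congruence_fixpoint:
  assumes "X = M ** X ** transpose M"
  shows "matrix_power M k ** X ** transpose (matrix_power M k) = (X :: real^'n^'n)"
proof (induction k)
  case (Suc k)
  have "matrix_power M (Suc k) ** X ** transpose (matrix_power M (Suc k))
      = matrix_power M k ** (M ** X ** transpose M) ** transpose (matrix_power M k)"
    by (simp add: matrix_transpose_mul matrix_mul_assoc)
  with Suc assms show ?case by simp
qed simp

lemma lyapunov_equation_ex1: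
  fixes M Q :: "real^'n^'n"
  assumes "(matrix_power M \<longlongrightarrow> 0) sequentially"
  shows "\<exists>!S. S = M ** S ** transpose M + Q"
proof -
  define T where "T X = X - M ** X ** transpose M" for X :: "real^'n^'n"
  have "linear T"
    unfolding T_def
    by (rule linearI) (simp_all add: matrix_add_ldistrib matrix_mult_add_right
        matrix_scalar_ac scalar_matrix_assoc transpose_add algebra_simps)
  moreover have "X = 0" if "T X = 0" for X
  proof -
    have fixpoint: "X = M ** X ** transpose M" using that by (simp add: T_def)
    have "((\<lambda>k. matrix_power M k ** X ** transpose (matrix_power M k))
        \<longlongrightarrow> 0 ** X ** transpose 0) sequentially"
      by (intro tendsto_matrix_mult tendsto_transpose assms tendsto_const)
    then show "X = 0"
      by (simp add: matrix_power_congruence_fixpoint[OF fixpoint] LIMSEQ_const_iff)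
  qed
  ultimately have "inj T" "surj T"
    by (simp_all add: linear_injective_0 eucl.linear_inj_imp_surj)
  moreover have "S = M ** S ** transpose M + Q \<longleftrightarrow> T S = Q" for S
    unfolding T_def by (metis add_diff_cancel_left' diff_add_cancel add.commute)
  ultimately show ?thesis
    by (metis injD surjD)
qed

lemma lyapunov_solution_psd:
  fixes M S :: "real^'n^'n"
  assumes lim: "(matrix_power M \<longlongrightarrow> 0) sequentially"
    and S: "S = M ** S ** transpose M + G ** transpose G"
  shows "psd S"
proof -
  have "transpose S = M ** transpose S ** transpose M + G ** transpose G"
    by (subst S) (simp add: transpose_add matrix_transpose_mul matrix_mul_assoc)
  then have "transpose S = S"
    using lyapunov_equation_ex1[OF lim, of "G ** transpose G"] S by blast
  moreover have "0 \<le> x \<bullet> (S *v x)" for x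
  proof -
    define q where "q k = x \<bullet> ((matrix_power M k ** S ** transpose (matrix_power M k)) *v x)" for k
    have "S - M ** S ** transpose M = G ** transpose G"
      using S by (metis add_diff_cancel_left')
    then have le: "loewner_le (M ** S ** transpose M) S"
      unfolding loewner_le_def by (simp add: psd_gram)
    have "q (Suc k) \<le> q k" for k
    proof -
      have "q (Suc k) = x \<bullet> ((matrix_power M k ** (M ** S ** transpose M)
          ** transpose (matrix_power M k)) *v x)"
        by (simp add: q_def matrix_transpose_mul matrix_mul_assoc)
      also have "\<dots> \<le> q k"
        unfolding q_def by (rule loewner_le_quadratic_form[OF loewner_le_congruence[OF le]])
      finally show ?thesis .
    qed
    then have "decseq q" by (rule decseq_SucI)
    moreover have "q \<longlonglongrightarrow> x \<bullet> ((0 ** S ** transpose 0) *v x)"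
      unfolding q_def
      by (intro tendsto_inner tendsto_const tendsto_matrix_vector_mult tendsto_matrix_mult
          tendsto_transpose lim)
    ultimately have "0 \<le> q 0" using decseq_ge by fastforce
    then show ?thesis by (simp add: q_def)
  qed
  ultimately show ?thesis unfolding psd_def by blast
qed

lemma Sigma_x_solves_lyapunov:
  assumes "spec_rad (A - L ** C) < 1"
  shows "Sigma_x A C Bw Dw L = (A - L ** C) ** Sigma_x A C Bw Dw L ** transpose (A - L ** C)
           + (Bw - L ** Dw) ** transpose (Bw - L ** Dw)"
  unfolding Sigma_x_def
  by (rule theI', rule lyapunov_equation_ex1, rule matrix_power_tendsto_zero[OF assms])

lemma Sigma_r_psd:
  assumes "spec_rad (A - L ** C) < 1"
  shows "psd (Sigma_r A C Bw Dw L)"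
proof -
  have "psd (Sigma_x A C Bw Dw L)"
    by (rule lyapunov_solution_psd[OF matrix_power_tendsto_zero[OF assms]
          Sigma_x_solves_lyapunov[OF assms]])
  then show ?thesis
    unfolding Sigma_r_def by (intro psd_add psd_congruence psd_gram)
qed

theorem proposition1:
  fixes A :: "real^'nx^'nx" and C :: "(real^'nx, 'ny::{finite,linorder}) vec"
    and Bw :: "real^'nw^'nx"
    and Dw :: "(real^'nw, 'ny) vec" and Lkal :: "((real, 'ny) vec)^'nx"
    and j :: "'na::{finite,linorder} \<Rightarrow> 'ny"
    and W :: "((real, 'ny) vec, 'ny) vec"
  assumes det: "detectable A C"
    and stab: "stabilizable A Bw"
    and inv: "\<And>L. spec_rad (A - L ** C) < 1 \<Longrightarrow> invertible (Sigma_r A C Bw Dw L)"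
    and kal_stab: "spec_rad (A - Lkal ** C) < 1"
    and kal_min: "\<And>L. spec_rad (A - L ** C) < 1 \<Longrightarrow>
                    loewner_le (Sigma_r A C Bw Dw Lkal) (Sigma_r A C Bw Dw L)"
    and j_mono: "strict_mono j"
    and W_psd: "psd W"
  shows "(\<forall>L lam. feasible A C Bw Dw (sel_matrix j) W L lam \<longrightarrow>
             feasible A C Bw Dw (sel_matrix j) W Lkal lam) \<and>
         (\<forall>L. spec_rad (A - L ** C) < 1 \<longrightarrow>
             J0 A C Bw Dw (sel_matrix j) W L \<le> J0 A C Bw Dw (sel_matrix j) W Lkal)"
proof -
  let ?D = "sel_matrix j"
  let ?R = "\<lambda>L. (1/2) *\<^sub>R (transpose ?D ** matrix_inv (Sigma_r A C Bw Dw L) ** ?D)"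
  have inv_le: "loewner_le (matrix_inv (Sigma_r A C Bw Dw L)) (matrix_inv (Sigma_r A C Bw Dw Lkal))"
    if "spec_rad (A - L ** C) < 1" for L
    by (rule loewner_le_matrix_inv[OF Sigma_r_psd[OF kal_stab] kal_min[OF that]
          inv[OF kal_stab] inv[OF that]])
  have "feasible A C Bw Dw ?D W Lkal lam" if "feasible A C Bw Dw ?D W L lam" for L lam
  proof -
    have "lam > 0" and stable: "spec_rad (A - L ** C) < 1"
      and "loewner_le (lam *\<^sub>R (transpose ?D ** W ** ?D)) (?R L)"
      using that unfolding feasible_def loewner_le_def by auto
    moreover have "loewner_le (?R L) (?R Lkal)"
      using loewner_le_congruence[OF inv_le[OF stable], where D = "transpose ?D"]
      by (intro loewner_le_scaleR) simp_all
    ultimately show ?thesis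
      using kal_stab loewner_le_trans unfolding feasible_def loewner_le_def by blast
  qed
  moreover have "J0 A C Bw Dw ?D W L \<le> J0 A C Bw Dw ?D W Lkal"
    if "spec_rad (A - L ** C) < 1" for L
    unfolding J0_def
    using loewner_le_quadratic_form[OF inv_le[OF that]] by (intro INF_mono) auto
  ultimately show ?thesis by blast
qed

end
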